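(* For every $M\in\mathbb N$, every prime power $q$ and every $\varepsilon>0$, for almost all $a\in(\mathbb F_q^M)^\infty$ (uniform product measure), $$-\varepsilon<\liminf_{n\to\infty}\frac{d_a(n)}{n}\le\limsup_{n\to\infty}\frac{d_a(n)}{n}<\varepsilon.$$
   Context: Let $q$ be a prime power and $M\ge1$. For $a=(a_{k,m})_{k\ge1,\,1\le m\le M}\in(\mathbb F_q^M)^\infty$ and $n\in\mathbb N_0$, $L_a(n)$ is the least $L\ge0$ such that there exist $c_1,\dots,c_L\in\mathbb F_q$ with $a_{k,m}=\sum_{i=1}^L c_i a_{k-i,m}$ for all $L<k\le n$ and all $1\le m\le M$; $L_a(0)=0$. The linear complexity deviation is $d_a(n)=L_a(n)-\lceil nM/(M+1)\rceil$. *)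

theory Defs
  imports "HOL-Probability.Probability"
begin

text \<open>A multi-sequence a over the finite field 'f: a k m for k \<ge> 1 and 1 \<le> m \<le> M
  (values at k = 0 or outside 1..M are irrelevant).\<close>

definition lin_rec :: "nat \<Rightarrow> (nat \<Rightarrow> nat \<Rightarrow> 'f::field) \<Rightarrow> nat \<Rightarrow> nat \<Rightarrow> bool" where
  "lin_rec M a n L \<longleftrightarrow> (\<exists>c :: nat \<Rightarrow> 'f. \<forall>k. L < k \<and> k \<le> n \<longrightarrow>
      (\<forall>m\<in>{1..M}. a k m = (\<Sum>i=1..L. c i * a (k - i) m)))"

definition lin_compl :: "nat \<Rightarrow> (nat \<Rightarrow> nat \<Rightarrow> 'f::field) \<Rightarrow> nat \<Rightarrow> nat" where
  "lin_compl M a n = (LEAST L. lin_rec M a n L)"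

definition lc_dev :: "nat \<Rightarrow> (nat \<Rightarrow> nat \<Rightarrow> 'f::field) \<Rightarrow> nat \<Rightarrow> int" where
  "lc_dev M a n = int (lin_compl M a n) - \<lceil>real (n * M) / real (M + 1)\<rceil>"

definition seq_measure :: "nat \<Rightarrow> (nat \<Rightarrow> nat \<Rightarrow> 'f::finite) measure" where
  "seq_measure M = PiM (UNIV :: nat set)
     (\<lambda>_. PiM {1..M} (\<lambda>_. uniform_count_measure (UNIV :: 'f set)))"

end

theory Submission
  imports Defs
begin

text \<open>The argument is Borel--Cantelli. Let q be the size of the field and \<theta> = M/(M+1).
  Among the q^(nM) prefixes of length n, those with L_a(n) \<le> L are determined by L recurrence
  coefficients and their first L terms, so there are at most q^(L(M+1)). If L_a(n) > L, the
  linear system for the coefficients is unsolvable, so a nonzero combination y of its (n-L)M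
  equations annihilates all L coefficient columns; for fixed y these are L triangular linear
  conditions, leaving at most q^(nM-L) prefixes, and there are at most q^((n-L)M) choices of y.
  For L \<le> (\<theta>-\<delta>)n, resp. L \<ge> (\<theta>+\<delta>)n, both bounds are a fraction q^(-\<delta>(M+1)n) of all
  prefixes, which is summable in n. Hence almost surely (\<theta>-\<delta>)n < L_a(n) \<le> (\<theta>+\<delta>)n + 1
  for all large n.\<close>

section \<open>Linear recurrences\<close>

type_synonym 'f mseq = "nat \<Rightarrow> nat \<Rightarrow> 'f"

definition satisfies_rec :: "nat \<Rightarrow> (nat \<Rightarrow> 'f::field) \<Rightarrow> nat \<Rightarrow> nat \<Rightarrow> 'f mseq \<Rightarrow> bool" where
  "satisfies_rec M c n L a \<longleftrightarrow>
     (\<forall>k. L < k \<and> k \<le> n \<longrightarrow> (\<forall>m\<in>{1..M}. a k m = (\<Sum>i=1..L. c i * a (k - i) m)))"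

lemma lin_rec_iff_satisfies_rec: "lin_rec M a n L \<longleftrightarrow> (\<exists>c. satisfies_rec M c n L a)"
  unfolding lin_rec_def satisfies_rec_def ..

lemma lin_rec_trivial: "n \<le> L \<Longrightarrow> lin_rec M a n L"
  unfolding lin_rec_def by auto

lemma lin_rec_mono:
  assumes "lin_rec M a n L'" "L' \<le> L"
  shows "lin_rec M a n L"
proof -
  obtain c where c: "satisfies_rec M c n L' a"
    using assms(1) by (auto simp: lin_rec_iff_satisfies_rec)
  define c' where "c' i = (if i \<le> L' then c i else 0)" for i
  have "(\<Sum>i=1..L. c' i * a (k - i) m) = (\<Sum>i=1..L'. c i * a (k - i) m)" for k m
    using assms(2) by (intro sum.mono_neutral_cong_right) (auto simp: c'_def)
  then have "satisfies_rec M c' n L a"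
    using c assms(2) by (auto simp: satisfies_rec_def)
  then show ?thesis by (auto simp: lin_rec_iff_satisfies_rec)
qed

lemma lin_rec_restrict: "lin_rec M (restrict a {1..n}) n L \<longleftrightarrow> lin_rec M a n L"
proof -
  have "satisfies_rec M c n L (restrict a {1..n}) \<longleftrightarrow> satisfies_rec M c n L a" for c
  proof -
    have "(\<Sum>i=1..L. c i * restrict a {1..n} (k - i) m) = (\<Sum>i=1..L. c i * a (k - i) m)"
      if "L < k" "k \<le> n" for k m
      using that by (intro sum.cong) auto
    then show ?thesis unfolding satisfies_rec_def by auto
  qed
  then show ?thesis by (simp add: lin_rec_iff_satisfies_rec)
qed

lemma lin_compl_le_iff: "lin_compl M a n \<le> L \<longleftrightarrow> lin_rec M a n L"
proof
  have "lin_rec M a n (lin_compl M a n)"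
    unfolding lin_compl_def by (rule LeastI[of _ n]) (simp add: lin_rec_trivial)
  then show "lin_compl M a n \<le> L \<Longrightarrow> lin_rec M a n L" by (rule lin_rec_mono)
  show "lin_rec M a n L \<Longrightarrow> lin_compl M a n \<le> L"
    unfolding lin_compl_def by (rule Least_le)
qed

lemma lin_compl_le_length: "lin_compl M a n \<le> n"
  by (simp add: lin_compl_le_iff lin_rec_trivial)

section \<open>Solvability of linear systems\<close>

definition rows_independent :: "'r set \<Rightarrow> 'j set \<Rightarrow> ('r \<Rightarrow> 'j \<Rightarrow> 'f::field) \<Rightarrow> bool" where
  "rows_independent R J A \<longleftrightarrow> (\<forall>y. (\<forall>j\<in>J. (\<Sum>r\<in>R. y r * A r j) = 0) \<longrightarrow> (\<forall>r\<in>R. y r = 0))"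

lemma rows_independent_nonzero_entry:
  fixes A :: "'r \<Rightarrow> 'j \<Rightarrow> 'f::field"
  assumes "rows_independent R J A" "finite R" "r0 \<in> R"
  shows "\<exists>j\<in>J. A r0 j \<noteq> 0"
proof (rule ccontr)
  assume "\<not> ?thesis"
  then have "\<forall>j\<in>J. (\<Sum>r\<in>R. (if r = r0 then 1 else 0) * A r j) = 0"
    using assms(2,3) by (simp add: if_distrib[of "\<lambda>x. x * _"] sum.delta cong: if_cong)
  then show False
    using assms(1,3) unfolding rows_independent_def by fastforce
qed

lemma rows_independent_eliminate:
  fixes A :: "'r \<Rightarrow> 'j \<Rightarrow> 'f::field"
  assumes indep: "rows_independent (insert r0 R) J A" and "finite R" "r0 \<notin> R" "A r0 j0 \<noteq> 0"
  shows "rows_independent R J (\<lambda>r j. A r j - A r j0 / A r0 j0 * A r0 j)"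
  unfolding rows_independent_def
proof (intro allI impI)
  fix y assume y: "\<forall>j\<in>J. (\<Sum>r\<in>R. y r * (A r j - A r j0 / A r0 j0 * A r0 j)) = 0"
  define y' where "y' r = (if r = r0 then - (\<Sum>r\<in>R. y r * A r j0) / A r0 j0 else y r)" for r
  have "(\<Sum>r\<in>insert r0 R. y' r * A r j) = (\<Sum>r\<in>R. y r * (A r j - A r j0 / A r0 j0 * A r0 j))" for j
  proof -
    have "(\<Sum>r\<in>insert r0 R. y' r * A r j) = y' r0 * A r0 j + (\<Sum>r\<in>R. y r * A r j)"
      using assms(2,3) by (simp add: y'_def) (intro sum.cong, auto)
    also have "\<dots> = (\<Sum>r\<in>R. y r * (A r j - A r j0 / A r0 j0 * A r0 j))"
      by (simp add: y'_def algebra_simps sum_subtractf sum_distrib_left sum_distrib_right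
          sum_divide_distrib)
    finally show ?thesis .
  qed
  then have "\<forall>r\<in>insert r0 R. y' r = 0"
    using indep y unfolding rows_independent_def by simp
  then show "\<forall>r\<in>R. y r = 0"
    using assms(3) by (auto simp: y'_def split: if_splits)
qed

lemma rows_independent_solvable:
  fixes A :: "'r \<Rightarrow> 'j \<Rightarrow> 'f::field"
  assumes "finite R" "finite J" "rows_independent R J A"
  shows "\<exists>c. \<forall>r\<in>R. (\<Sum>j\<in>J. A r j * c j) = b r"
  using assms(1,3)
proof (induction R arbitrary: A b rule: finite_induct)
  case empty then show ?case by simp
next
  case (insert r0 R A b)
  obtain j0 where j0: "j0 \<in> J" "A r0 j0 \<noteq> 0"
    using rows_independent_nonzero_entry[OF insert.prems, of r0] insert.hyps(1) by auto
  define p where "p = A r0 j0"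
  obtain c where c: "\<forall>r\<in>R. (\<Sum>j\<in>J. (A r j - A r j0 / p * A r0 j) * c j) = b r - A r j0 / p * b r0"
    using insert.IH[OF rows_independent_eliminate[OF insert.prems insert.hyps j0(2)],
        of "\<lambda>r. b r - A r j0 / p * b r0"]
    unfolding p_def by blast
  define t where "t = (b r0 - (\<Sum>j\<in>J. A r0 j * c j)) / p"
  define c' where "c' j = c j + (if j = j0 then t else 0)" for j
  have sum_c': "(\<Sum>j\<in>J. B j * c' j) = (\<Sum>j\<in>J. B j * c j) + B j0 * t" for B :: "'j \<Rightarrow> 'f"
  proof -
    have "(\<Sum>j\<in>J. B j * c' j) = (\<Sum>j\<in>J. B j * c j + (if j = j0 then B j * t else 0))"
      by (intro sum.cong) (auto simp: c'_def algebra_simps)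
    then show ?thesis using j0(1) assms(2) by (simp add: sum.distrib sum.delta)
  qed
  have row0: "(\<Sum>j\<in>J. A r0 j * c' j) = b r0"
    using j0(2) by (simp add: sum_c' t_def p_def)
  have "(\<Sum>j\<in>J. A r j * c' j) = b r" if "r \<in> R" for r
  proof -
    have "(\<Sum>j\<in>J. A r j * c' j)
        = (\<Sum>j\<in>J. (A r j - A r j0 / p * A r0 j) * c' j) + A r j0 / p * (\<Sum>j\<in>J. A r0 j * c' j)"
      by (simp add: algebra_simps sum_subtractf sum_distrib_left)
    also have "(\<Sum>j\<in>J. (A r j - A r j0 / p * A r0 j) * c' j) = b r - A r j0 / p * b r0"
      using c that j0(2) sum_c'[of "\<lambda>j. A r j - A r j0 / p * A r0 j"] by (simp add: p_def)
    finally show ?thesis using row0 by simp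
  qed
  then show ?case using row0 by (intro exI[of _ c']) auto
qed

section \<open>Counting prefixes\<close>

definition prefixes :: "nat \<Rightarrow> nat \<Rightarrow> 'f mseq set" where
  "prefixes M n = PiE {1..n} (\<lambda>_. PiE {1..M} (\<lambda>_. UNIV))"

lemma finite_prefixes [simp]: "finite (prefixes M n :: 'f::finite mseq set)"
  unfolding prefixes_def by (intro finite_PiE) auto

lemma card_prefixes: "card (prefixes M n :: 'f::finite mseq set) = CARD('f) ^ (n * M)"
  unfolding prefixes_def by (simp add: card_PiE power_mult mult.commute)

lemma prefixes_eqI:
  assumes "x \<in> prefixes M n" "x' \<in> prefixes M n"
    and "\<And>k m. k \<in> {1..n} \<Longrightarrow> m \<in> {1..M} \<Longrightarrow> x k m = x' k m"
  shows "x = x'"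
proof -
  have "x k = x' k" if "k \<in> {1..n}" for k
    using assms that unfolding prefixes_def by (intro PiE_ext[of _ "{1..M}" "\<lambda>_. UNIV"]) auto
  then show ?thesis using assms(1,2) unfolding prefixes_def by (intro PiE_ext) auto
qed

lemma restrict_in_prefixes_iff:
  "restrict x {1..n} \<in> prefixes M n \<longleftrightarrow> (\<forall>k\<in>{1..n}. x k \<in> PiE {1..M} (\<lambda>_. UNIV))"
  by (simp add: prefixes_def restrict_PiE_iff Pi_iff)

lemma satisfies_rec_restrict_coeffs:
  "satisfies_rec M (restrict c {1..L}) n L x \<longleftrightarrow> satisfies_rec M c n L x"
proof -
  have "(\<Sum>i=1..L. restrict c {1..L} i * x (k - i) m) = (\<Sum>i=1..L. c i * x (k - i) m)" for k m
    by (intro sum.cong) auto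
  then show ?thesis unfolding satisfies_rec_def by simp
qed

lemma satisfies_rec_unique:
  assumes "x \<in> prefixes M n" "x' \<in> prefixes M n"
    and "satisfies_rec M c n L x" "satisfies_rec M c n L x'"
    and "\<And>k. k \<in> {1..L} \<Longrightarrow> x k = x' k"
  shows "x = x'"
proof (rule prefixes_eqI[OF assms(1,2)])
  fix k m assume "k \<in> {1..n}" "m \<in> {1..M}"
  then show "x k m = x' k m"
  proof (induction k rule: less_induct)
    case (less k)
    show ?case
    proof (cases "k \<le> L")
      case True
      then show ?thesis using assms(5) less.prems by auto
    next
      case False
      then have "x k m = (\<Sum>i=1..L. c i * x (k - i) m)" "x' k m = (\<Sum>i=1..L. c i * x' (k - i) m)"
        using assms(3,4) less.prems by (auto simp: satisfies_rec_def)
      moreover have "(\<Sum>i=1..L. c i * x (k - i) m) = (\<Sum>i=1..L. c i * x' (k - i) m)"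
        using less False by (intro sum.cong) auto
      ultimately show ?thesis by simp
    qed
  qed
qed

text \<open>A prefix with a recurrence of length L is determined by its coefficients and its first L
  terms.\<close>

lemma card_lin_rec_le:
  assumes "L \<le> n"
  shows "card {x \<in> prefixes M n :: 'f::{finite,field} mseq set. lin_rec M x n L}
           \<le> CARD('f) ^ (L * (M + 1))"
proof -
  define S :: "'f mseq set" where "S = {x \<in> prefixes M n. lin_rec M x n L}"
  define coeffs where "coeffs x = restrict (SOME c. satisfies_rec M c n L x) {1..L}"
    for x :: "'f mseq"
  have coeffs: "satisfies_rec M (coeffs x) n L x" if "x \<in> S" for x
    unfolding coeffs_def satisfies_rec_restrict_coeffs
    using that someI_ex[of "\<lambda>c. satisfies_rec M c n L x"]
    by (auto simp: S_def lin_rec_iff_satisfies_rec)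
  define g where "g x = (coeffs x, restrict x {1..L})" for x
  have "inj_on g S"
  proof (rule inj_onI)
    fix x x' assume "x \<in> S" "x' \<in> S" "g x = g x'"
    then have same_coeffs: "coeffs x = coeffs x'" and same_start: "restrict x {1..L} = restrict x' {1..L}"
      by (auto simp: g_def)
    have "x k = x' k" if "k \<in> {1..L}" for k
      using fun_cong[OF same_start, of k] that by simp
    then show "x = x'"
      using \<open>x \<in> S\<close> \<open>x' \<in> S\<close> coeffs[of x] coeffs[of x'] same_coeffs
      by (intro satisfies_rec_unique) (auto simp: S_def)
  qed
  moreover have "g ` S \<subseteq> PiE {1..L} (\<lambda>_. UNIV) \<times> prefixes M L"
  proof -
    have "restrict x {1..L} \<in> prefixes M L" if "x \<in> S" for x
      unfolding restrict_in_prefixes_iff using that assms unfolding S_def prefixes_def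
      by (auto intro: PiE_mem[of x "{1..n}"])
    then show ?thesis by (auto simp: g_def coeffs_def)
  qed
  ultimately have "card S \<le> card (PiE {1..L} (\<lambda>_. UNIV :: 'f set) \<times> (prefixes M L :: 'f mseq set))"
    by (intro card_inj_on_le finite_cartesian_product finite_PiE finite_prefixes) auto
  also have "\<dots> = CARD('f) ^ (L * (M + 1))"
    by (simp add: card_cartesian_product card_PiE card_prefixes power_add flip: power_mult)
  finally show ?thesis unfolding S_def .
qed

text \<open>The y-combination of the equations x k m = (\<Sum>i=1..L. c i * x (k - i) m) for
  (k, m) \<in> {L<..n} \<times> {1..M} has coefficient zero at every unknown c j.\<close>

definition annihilates_shifts ::
    "nat \<Rightarrow> nat \<Rightarrow> nat \<Rightarrow> (nat \<times> nat \<Rightarrow> 'f::field) \<Rightarrow> 'f mseq \<Rightarrow> bool" where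
  "annihilates_shifts M n L y x \<longleftrightarrow>
     (\<forall>j\<in>{1..L}. (\<Sum>r\<in>{L<..n} \<times> {1..M}. y r * x (fst r - j) (snd r)) = 0)"

lemma not_lin_rec_annihilator:
  assumes "\<not> lin_rec M x n L"
  obtains y where "y \<in> PiE ({L<..n} \<times> {1..M}) (\<lambda>_. UNIV)" "\<exists>r\<in>{L<..n} \<times> {1..M}. y r \<noteq> 0"
    "annihilates_shifts M n L y x"
proof -
  define R where "R = {L<..n} \<times> {1..M}"
  have "\<not> rows_independent R {1..L} (\<lambda>r j. x (fst r - j) (snd r))"
  proof
    assume indep: "rows_independent R {1..L} (\<lambda>r j. x (fst r - j) (snd r))"
    have "finite R" by (simp add: R_def)
    then obtain c where "\<forall>r\<in>R. (\<Sum>j=1..L. x (fst r - j) (snd r) * c j) = x (fst r) (snd r)"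
      using rows_independent_solvable[OF _ _ indep, of "\<lambda>r. x (fst r) (snd r)"] by blast
    then have "satisfies_rec M c n L x"
      by (auto simp: satisfies_rec_def R_def mult.commute)
    then show False
      using assms by (auto simp: lin_rec_iff_satisfies_rec)
  qed
  then obtain y where y: "\<forall>j\<in>{1..L}. (\<Sum>r\<in>R. y r * x (fst r - j) (snd r)) = 0" "\<exists>r\<in>R. y r \<noteq> 0"
    unfolding rows_independent_def by blast
  have "(\<Sum>r\<in>R. restrict y R r * x (fst r - j) (snd r)) = (\<Sum>r\<in>R. y r * x (fst r - j) (snd r))" for j
    by (intro sum.cong) auto
  with y show thesis
    by (intro that[of "restrict y R"]) (auto simp: R_def annihilates_shifts_def)
qed

lemma annihilates_shifts_pivot:
  assumes "annihilates_shifts M n L y x" "(ks, ms) \<in> {L<..n} \<times> {1..M}" "j \<in> {1..L}"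
  shows "y (ks, ms) * x (ks - j) ms
    = - (\<Sum>r\<in>{L<..n} \<times> {1..M} - {(ks, ms)}. y r * x (fst r - j) (snd r))"
  using assms sum.remove[of "{L<..n} \<times> {1..M}" "(ks, ms)" "\<lambda>r. y r * x (fst r - j) (snd r)"]
  unfolding annihilates_shifts_def by (simp add: eq_neg_iff_add_eq_0)

text \<open>Below the top row ks of the support of y, the annihilation conditions form a triangular
  system in the cells (ks - j, ms), j = 1..L.\<close>

lemma annihilates_shifts_eqI:
  fixes y :: "nat \<times> nat \<Rightarrow> 'f::field"
  assumes pivot: "(ks, ms) \<in> {L<..n} \<times> {1..M}" "y (ks, ms) \<noteq> 0"
    and top: "\<And>k m. (k, m) \<in> {L<..n} \<times> {1..M} \<Longrightarrow> y (k, m) \<noteq> 0 \<Longrightarrow> k \<le> ks"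
    and ann: "annihilates_shifts M n L y x" "annihilates_shifts M n L y x'"
    and off_pivot: "\<And>k m. (k, m) \<notin> (\<lambda>j. (ks - j, ms)) ` {1..L} \<Longrightarrow> x k m = x' k m"
  shows "x = x'"
proof -
  have "x k m = x' k m" for k m
  proof (induction k arbitrary: m rule: less_induct)
    case (less k)
    show ?case
    proof (cases "(k, m) \<in> (\<lambda>j. (ks - j, ms)) ` {1..L}")
      case False
      then show ?thesis by (rule off_pivot)
    next
      case True
      then obtain j where j: "j \<in> {1..L}" "k = ks - j" "m = ms" by auto
      have rest: "y r * x (fst r - j) (snd r) = y r * x' (fst r - j) (snd r)"
        if r: "r \<in> {L<..n} \<times> {1..M} - {(ks, ms)}" for r
      proof (cases "y r = 0")
        case False
        obtain k1 m1 where r_eq: "r = (k1, m1)" by fastforce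
        have "k1 \<le> ks" "L < k1" using top[of k1 m1] r False r_eq by auto
        show ?thesis
        proof (cases "k1 < ks")
          case True
          then have "k1 - j < k" using j \<open>L < k1\<close> by auto
          then show ?thesis using less r_eq by simp
        next
          case False
          then have "m1 \<noteq> ms" using \<open>k1 \<le> ks\<close> r r_eq by auto
          then show ?thesis using off_pivot r_eq by auto
        qed
      qed simp
      have "y (ks, ms) * x k m = y (ks, ms) * x' k m"
        using annihilates_shifts_pivot[OF ann(1) pivot(1) j(1)]
          annihilates_shifts_pivot[OF ann(2) pivot(1) j(1)]
          sum.cong[OF refl rest, of "{L<..n} \<times> {1..M} - {(ks, ms)}"] j(2,3)
        by simp
      then show ?thesis using pivot(2) by simp
    qed
  qed
  then show ?thesis by (intro ext)
qed

lemma obtain_topmost_nonzero: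
  fixes y :: "nat \<times> 'b \<Rightarrow> 'a::zero"
  assumes "finite R" "\<exists>r\<in>R. y r \<noteq> 0"
  obtains k0 m0 where "(k0, m0) \<in> R" "y (k0, m0) \<noteq> 0"
    "\<And>k m. (k, m) \<in> R \<Longrightarrow> y (k, m) \<noteq> 0 \<Longrightarrow> k \<le> k0"
proof -
  define K where "K = fst ` {r \<in> R. y r \<noteq> 0}"
  have "finite K" "K \<noteq> {}"
    using assms unfolding K_def by auto
  then have "Max K \<in> K"
    by (rule Max_in)
  moreover have "k \<le> Max K" if "(k, m) \<in> R" "y (k, m) \<noteq> 0" for k m
    using \<open>finite K\<close> that unfolding K_def by (intro Max_ge) (auto intro: image_eqI[of _ fst "(k, m)"])
  ultimately show thesis
    using that unfolding K_def by force
qed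

text \<open>Adding arbitrary values on L fixed cells is injective on a set of prefixes that are
  determined by their values off these cells.\<close>

lemma card_determined_off_cells_le:
  fixes E :: "'f::{finite,field} mseq set" and cell :: "nat \<Rightarrow> nat \<times> nat"
  assumes "E \<subseteq> prefixes M n" "inj_on cell {1..L}" "cell ` {1..L} \<subseteq> {1..n} \<times> {1..M}"
    and determined: "\<And>x x'. x \<in> E \<Longrightarrow> x' \<in> E \<Longrightarrow>
      (\<And>k m. (k, m) \<notin> cell ` {1..L} \<Longrightarrow> x k m = x' k m) \<Longrightarrow> x = x'"
  shows "card E * CARD('f) ^ L \<le> CARD('f) ^ (n * M)"
proof -
  define P where "P = cell ` {1..L}"
  define T where "T = PiE {1..L} (\<lambda>_. UNIV :: 'f set)"
  define shift where "shift p = (\<lambda>k m. if (k, m) \<in> P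
      then fst p k m + snd p (the_inv_into {1..L} cell (k, m)) else fst p k m)"
    for p :: "'f mseq \<times> (nat \<Rightarrow> 'f)"
  have "shift ` (E \<times> T) \<subseteq> prefixes M n"
  proof clarify
    fix x t assume "x \<in> E" "t \<in> T"
    then have x: "x \<in> prefixes M n" using assms(1) by blast
    have "shift (x, t) k = x k" if "k \<notin> {1..n}" for k
      using assms(3) that by (auto simp: shift_def P_def fun_eq_iff)
    moreover have "shift (x, t) k m = x k m" if "m \<notin> {1..M}" for k m
      using assms(3) that by (auto simp: shift_def P_def)
    ultimately show "shift (x, t) \<in> prefixes M n"
      using x unfolding prefixes_def PiE_iff extensional_def by auto
  qed
  moreover have "inj_on shift (E \<times> T)"
  proof (clarsimp simp: inj_on_def)
    fix x t x' t' assume "x \<in> E" "t \<in> T" "x' \<in> E" "t' \<in> T" and eq: "shift (x, t) = shift (x', t')"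
    have "x k m = x' k m" if "(k, m) \<notin> P" for k m
      using fun_cong[OF fun_cong[OF eq, of k], of m] that by (simp add: shift_def)
    then have "x = x'"
      using determined \<open>x \<in> E\<close> \<open>x' \<in> E\<close> unfolding P_def by blast
    moreover have "t j = t' j" if "j \<in> {1..L}" for j
    proof -
      have "cell j \<in> P" "the_inv_into {1..L} cell (cell j) = j"
        using that assms(2) by (auto simp: P_def the_inv_into_f_f)
      then show ?thesis
        using fun_cong[OF fun_cong[OF eq, of "fst (cell j)"], of "snd (cell j)"] \<open>x = x'\<close>
        by (simp add: shift_def)
    qed
    then have "t = t'"
      using \<open>t \<in> T\<close> \<open>t' \<in> T\<close> unfolding T_def by (intro PiE_ext) auto
    ultimately show "x = x' \<and> t = t'" by simp
  qed
  ultimately have "card (E \<times> T) \<le> card (prefixes M n :: 'f mseq set)"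
    by (intro card_inj_on_le finite_prefixes)
  then show ?thesis
    by (simp add: T_def card_cartesian_product card_PiE card_prefixes)
qed

lemma card_annihilates_shifts:
  fixes y :: "nat \<times> nat \<Rightarrow> 'f::{finite,field}"
  assumes "\<exists>r\<in>{L<..n} \<times> {1..M}. y r \<noteq> 0"
  shows "card {x \<in> prefixes M n. annihilates_shifts M n L y x} * CARD('f) ^ L \<le> CARD('f) ^ (n * M)"
proof -
  obtain ks ms where pivot: "(ks, ms) \<in> {L<..n} \<times> {1..M}" "y (ks, ms) \<noteq> 0"
    and top: "\<And>k m. (k, m) \<in> {L<..n} \<times> {1..M} \<Longrightarrow> y (k, m) \<noteq> 0 \<Longrightarrow> k \<le> ks"
    using obtain_topmost_nonzero[OF _ assms] by blast
  show ?thesis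
  proof (rule card_determined_off_cells_le)
    show "inj_on (\<lambda>j. (ks - j, ms)) {1..L}"
      using pivot(1) by (auto simp: inj_on_def)
    show "(\<lambda>j. (ks - j, ms)) ` {1..L} \<subseteq> {1..n} \<times> {1..M}"
      using pivot(1) by auto
    show "x = x'" if "x \<in> {x \<in> prefixes M n. annihilates_shifts M n L y x}"
      "x' \<in> {x \<in> prefixes M n. annihilates_shifts M n L y x}"
      "\<And>k m. (k, m) \<notin> (\<lambda>j. (ks - j, ms)) ` {1..L} \<Longrightarrow> x k m = x' k m" for x x'
      by (rule annihilates_shifts_eqI[of ks ms L n M y]) (use pivot top that in auto)
  qed auto
qed

lemma card_not_lin_rec_le:
  "card {x \<in> prefixes M n :: 'f::{finite,field} mseq set. \<not> lin_rec M x n L} * CARD('f) ^ L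
     \<le> CARD('f) ^ ((n - L) * M) * CARD('f) ^ (n * M)"
proof -
  define S where "S = {x \<in> prefixes M n :: 'f mseq set. \<not> lin_rec M x n L}"
  define R where "R = {L<..n} \<times> {1..M}"
  define Y where "Y = {y \<in> PiE R (\<lambda>_. UNIV :: 'f set). \<exists>r\<in>R. y r \<noteq> 0}"
  define E where "E y = {x \<in> prefixes M n :: 'f mseq set. annihilates_shifts M n L y x}" for y
  have finite_PiE_R: "finite (PiE R (\<lambda>_. UNIV :: 'f set))"
    by (intro finite_PiE) (auto simp: R_def)
  have Y_sub: "Y \<subseteq> PiE R (\<lambda>_. UNIV)"
    unfolding Y_def by blast
  have finite_Y: "finite Y"
    using finite_subset[OF Y_sub finite_PiE_R] .
  have "S \<subseteq> (\<Union>y\<in>Y. E y)"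
  proof (clarsimp simp only: S_def mem_Collect_eq)
    fix x :: "'f mseq" assume x: "x \<in> prefixes M n" and "\<not> lin_rec M x n L"
    obtain y where "y \<in> PiE R (\<lambda>_. UNIV)" "\<exists>r\<in>R. y r \<noteq> 0" "annihilates_shifts M n L y x"
      unfolding R_def by (rule not_lin_rec_annihilator[OF \<open>\<not> lin_rec M x n L\<close>])
    then show "x \<in> (\<Union>y\<in>Y. E y)"
      using x unfolding Y_def E_def by blast
  qed
  moreover have "finite (\<Union>y\<in>Y. E y)"
    by (rule finite_subset[OF _ finite_prefixes]) (auto simp: E_def)
  ultimately have "card S \<le> card (\<Union>y\<in>Y. E y)"
    by (intro card_mono)
  also have "\<dots> \<le> (\<Sum>y\<in>Y. card (E y))"
    using finite_Y by (rule card_UN_le)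
  finally have "card S * CARD('f) ^ L \<le> (\<Sum>y\<in>Y. card (E y)) * CARD('f) ^ L"
    by (rule mult_right_mono) simp
  also have "\<dots> = (\<Sum>y\<in>Y. card (E y) * CARD('f) ^ L)"
    by (rule sum_distrib_right)
  also have "\<dots> \<le> (\<Sum>y\<in>Y. CARD('f) ^ (n * M))"
    unfolding E_def by (intro sum_mono card_annihilates_shifts) (auto simp: Y_def R_def)
  also have "\<dots> = card Y * CARD('f) ^ (n * M)"
    by simp
  also have "card Y \<le> CARD('f) ^ ((n - L) * M)"
    using card_mono[OF finite_PiE_R Y_sub] by (simp add: card_PiE R_def card_cartesian_product)
  finally show ?thesis
    unfolding S_def by (simp add: mult_right_mono)
qed

section \<open>The uniform product measure\<close>

lemma emeasure_uniform_count_measure_singleton: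
  assumes "finite A" "x \<in> A"
  shows "emeasure (uniform_count_measure A) {x} = ennreal (1 / card A)"
proof -
  interpret prob_space "uniform_count_measure A"
    using assms by (intro prob_space_uniform_count_measure) auto
  show ?thesis
    using assms by (simp add: emeasure_eq_measure measure_uniform_count_measure)
qed

lemma PiM_uniform_count_measure:
  assumes "finite I" "\<And>i. finite (B i)" "\<And>i. B i \<noteq> {}"
  shows "PiM I (\<lambda>i. uniform_count_measure (B i)) = uniform_count_measure (PiE I B)"
proof (rule measure_eqI_countable')
  show "space (PiM I (\<lambda>i. uniform_count_measure (B i))) = PiE I B"
    by (simp add: space_PiM space_uniform_count_measure)
  show "space (uniform_count_measure (PiE I B)) = PiE I B"
    by (simp add: space_uniform_count_measure)
  show "countable (PiE I B)"
    using assms by (intro countable_finite finite_PiE) auto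
next
  interpret product_sigma_finite "\<lambda>i. uniform_count_measure (B i)"
    using assms by (intro product_sigma_finite.intro prob_space_imp_sigma_finite
        prob_space_uniform_count_measure)
  fix f assume f: "f \<in> PiE I B"
  then have singleton: "{f} = PiE I (\<lambda>i. {f i})"
    by (intro PiE_singleton[symmetric]) (auto simp: PiE_def)
  show "{f} \<in> sets (PiM I (\<lambda>i. uniform_count_measure (B i)))"
    unfolding singleton using f assms by (intro sets_PiM_I_finite) (auto simp: sets_uniform_count_measure)
  show "{f} \<in> sets (uniform_count_measure (PiE I B))"
    using f by (simp add: sets_uniform_count_measure)
  have "emeasure (PiM I (\<lambda>i. uniform_count_measure (B i))) {f}
      = (\<Prod>i\<in>I. emeasure (uniform_count_measure (B i)) {f i})"
    unfolding singleton using f assms by (intro emeasure_PiM) (auto simp: sets_uniform_count_measure)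
  also have "\<dots> = (\<Prod>i\<in>I. ennreal (1 / card (B i)))"
    using f assms by (intro prod.cong refl emeasure_uniform_count_measure_singleton) auto
  also have "\<dots> = ennreal (1 / card (PiE I B))"
    by (simp add: prod_ennreal card_PiE[OF assms(1)] prod_dividef)
  also have "\<dots> = emeasure (uniform_count_measure (PiE I B)) {f}"
    using f assms by (simp add: emeasure_uniform_count_measure_singleton finite_PiE)
  finally show "emeasure (PiM I (\<lambda>i. uniform_count_measure (B i))) {f}
      = emeasure (uniform_count_measure (PiE I B)) {f}" .
qed

lemma seq_measure_eq:
  "seq_measure M = PiM UNIV (\<lambda>_. uniform_count_measure (PiE {1..M} (\<lambda>_. UNIV :: 'f::finite set)))"
  unfolding seq_measure_def by (simp add: PiM_uniform_count_measure)

lemma PiM_prefixes: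
  "PiM {1..n} (\<lambda>_. uniform_count_measure (PiE {1..M} (\<lambda>_. UNIV :: 'f::finite set)))
     = uniform_count_measure (prefixes M n)"
  unfolding prefixes_def by (intro PiM_uniform_count_measure finite_PiE) auto

lemma prob_space_seq_measure: "prob_space (seq_measure M :: 'f::finite mseq measure)"
  unfolding seq_measure_eq
  by (intro prob_space_PiM prob_space_uniform_count_measure finite_PiE) auto

lemma distr_seq_measure_restrict:
  "distr (seq_measure M) (uniform_count_measure (prefixes M n)) (\<lambda>a. restrict a {1..n})
     = uniform_count_measure (prefixes M n :: 'f::finite mseq set)"
proof -
  let ?B = "uniform_count_measure (PiE {1..M} (\<lambda>_. UNIV :: 'f set))"
  interpret product_prob_space "\<lambda>_. ?B" UNIV
    by (intro product_prob_spaceI prob_space_uniform_count_measure finite_PiE) auto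
  have "distr (PiM UNIV (\<lambda>_. ?B)) (PiM {1..n} (\<lambda>_. ?B)) (\<lambda>a. restrict a {1..n})
      = PiM {1..n} (\<lambda>_. ?B)"
    by (rule distr_PiM_restrict_finite) auto
  then show ?thesis
    unfolding seq_measure_eq PiM_prefixes .
qed

lemma
  fixes P :: "'f::finite mseq \<Rightarrow> bool"
  shows sets_seq_measure_prefix:
      "{a \<in> space (seq_measure M). P (restrict a {1..n})} \<in> sets (seq_measure M)"
    and measure_seq_measure_prefix:
      "measure (seq_measure M) {a \<in> space (seq_measure M). P (restrict a {1..n})}
         = card {x \<in> prefixes M n. P x} / CARD('f) ^ (n * M)"
proof -
  let ?B = "uniform_count_measure (PiE {1..M} (\<lambda>_. UNIV :: 'f set))"
  have "(\<lambda>a. restrict a {1..n}) \<in> measurable (PiM UNIV (\<lambda>_. ?B)) (PiM {1..n} (\<lambda>_. ?B))"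
    by (rule measurable_restrict_subset) simp
  then have meas: "(\<lambda>a. restrict a {1..n})
      \<in> measurable (seq_measure M :: 'f mseq measure) (uniform_count_measure (prefixes M n))"
    unfolding seq_measure_eq PiM_prefixes .
  have "restrict a {1..n} \<in> prefixes M n" if "a \<in> space (seq_measure M :: 'f mseq measure)" for a
    using that unfolding restrict_in_prefixes_iff seq_measure_eq
    by (auto simp: space_PiM space_uniform_count_measure PiE_iff)
  then have event: "{a \<in> space (seq_measure M). P (restrict a {1..n})}
      = (\<lambda>a. restrict a {1..n}) -` {x \<in> prefixes M n. P x} \<inter> space (seq_measure M)"
    by auto
  have sets: "{x \<in> prefixes M n. P x} \<in> sets (uniform_count_measure (prefixes M n))"
    by (auto simp: sets_uniform_count_measure)
  show "{a \<in> space (seq_measure M). P (restrict a {1..n})} \<in> sets (seq_measure M)"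
    unfolding event using meas sets by (rule measurable_sets)
  have "measure (seq_measure M) {a \<in> space (seq_measure M). P (restrict a {1..n})}
      = measure (uniform_count_measure (prefixes M n)) {x \<in> prefixes M n. P x}"
    unfolding event measure_distr[OF meas sets, symmetric] distr_seq_measure_restrict ..
  also have "\<dots> = card {x \<in> prefixes M n. P x} / CARD('f) ^ (n * M)"
    by (simp add: measure_uniform_count_measure card_prefixes)
  finally show "measure (seq_measure M) {a \<in> space (seq_measure M). P (restrict a {1..n})}
      = card {x \<in> prefixes M n. P x} / CARD('f) ^ (n * M)" .
qed

lemma AE_eventually_prefix_avoids:
  fixes P :: "nat \<Rightarrow> 'f::finite mseq \<Rightarrow> bool" and r :: real
  assumes "0 \<le> r" "r < 1"
    and card: "\<And>n. real (card {x \<in> prefixes M n. P n x}) \<le> r ^ n * CARD('f) ^ (n * M)"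
  shows "AE a in seq_measure M. eventually (\<lambda>n. \<not> P n (restrict a {1..n})) sequentially"
proof -
  interpret prob_space "seq_measure M :: 'f mseq measure"
    by (rule prob_space_seq_measure)
  define A where "A n = {a \<in> space (seq_measure M). P n (restrict a {1..n})}" for n
  have "AE a in seq_measure M. eventually (\<lambda>n. a \<in> space (seq_measure M) - A n) sequentially"
  proof (rule borel_cantelli_AE1)
    show "A n \<in> sets (seq_measure M)" for n
      unfolding A_def by (rule sets_seq_measure_prefix)
    then show "emeasure (seq_measure M) (A n) < \<infinity>" for n
      by (simp add: emeasure_eq_measure)
    have "measure (seq_measure M) (A n) \<le> r ^ n" for n
      using card[of n] unfolding A_def measure_seq_measure_prefix by (simp add: divide_le_eq)
    then show "summable (\<lambda>n. measure (seq_measure M) (A n))"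
      using assms(1,2) by (intro summable_comparison_test[OF _ summable_geometric]) auto
  qed
  then show ?thesis
    by (elim AE_mp) (auto simp: A_def elim: eventually_mono)
qed

section \<open>Almost sure bounds on the linear complexity\<close>

lemma two_le_card_field: "2 \<le> CARD('f::{finite,field})"
proof -
  have "card {0, 1 :: 'f} \<le> CARD('f)"
    by (rule card_mono) auto
  then show ?thesis by simp
qed

lemma power_le_geometric_times_power:
  fixes q d :: real
  assumes "1 \<le> q" "real e \<le> real k - d * real n"
  shows "q ^ e \<le> (q powr (-d)) ^ n * q ^ k"
proof -
  have "q ^ e = q powr real e"
    using assms(1) by (simp add: powr_realpow)
  also have "\<dots> \<le> q powr (real k - d * real n)"
    using assms by (intro powr_mono) auto
  also have "\<dots> = q powr (real n * (-d)) * q powr real k"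
    by (simp add: powr_add[symmetric] algebra_simps)
  also have "\<dots> = (q powr (-d)) ^ n * q ^ k"
    using assms(1) by (simp add: powr_power powr_realpow)
  finally show ?thesis .
qed

lemma AE_eventually_less_lin_compl:
  fixes lo :: "nat \<Rightarrow> nat" and d :: real
  assumes "0 < d" "\<And>n. lo n \<le> n" "\<And>n. real (lo n * (M + 1)) \<le> real (n * M) - d * n"
  shows "AE a in (seq_measure M :: 'f::{finite,field} mseq measure).
           eventually (\<lambda>n. lo n < lin_compl M a n) sequentially"
proof -
  define q where "q = real CARD('f)"
  have q: "2 \<le> q"
    unfolding q_def using two_le_card_field[where 'f='f] by linarith
  have "real (card {x \<in> prefixes M n :: 'f mseq set. lin_rec M x n (lo n)})
      \<le> (q powr (-d)) ^ n * CARD('f) ^ (n * M)" for n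
  proof -
    have "real (card {x \<in> prefixes M n :: 'f mseq set. lin_rec M x n (lo n)}) \<le> q ^ (lo n * (M + 1))"
      unfolding q_def of_nat_power[symmetric] of_nat_le_iff by (rule card_lin_rec_le[OF assms(2)])
    also have "\<dots> \<le> (q powr (-d)) ^ n * q ^ (n * M)"
      using q assms(3) by (intro power_le_geometric_times_power) auto
    finally show ?thesis by (simp add: q_def)
  qed
  moreover have "q powr (-d) < 1"
    using q assms(1) by (intro powr_less_one) auto
  ultimately have "AE a in seq_measure M :: 'f mseq measure.
      eventually (\<lambda>n. \<not> lin_rec M (restrict a {1..n}) n (lo n)) sequentially"
    by (intro AE_eventually_prefix_avoids[where r="q powr (-d)"]) auto
  then have "AE a in seq_measure M :: 'f mseq measure.
      eventually (\<lambda>n. \<not> lin_rec M a n (lo n)) sequentially"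
    unfolding lin_rec_restrict .
  then show ?thesis
    unfolding lin_compl_le_iff[symmetric] not_le .
qed

lemma AE_eventually_lin_compl_le:
  fixes hi :: "nat \<Rightarrow> nat" and d :: real
  assumes "0 < d" "\<And>n. hi n \<le> n" "\<And>n. real (n * M) + d * n \<le> real (hi n * (M + 1))"
  shows "AE a in (seq_measure M :: 'f::{finite,field} mseq measure).
           eventually (\<lambda>n. lin_compl M a n \<le> hi n) sequentially"
proof -
  define q where "q = real CARD('f)"
  have q: "2 \<le> q"
    unfolding q_def using two_le_card_field[where 'f='f] by linarith
  have "real (card {x \<in> prefixes M n :: 'f mseq set. \<not> lin_rec M x n (hi n)})
      \<le> (q powr (-d)) ^ n * CARD('f) ^ (n * M)" for n
  proof -
    let ?S = "{x \<in> prefixes M n :: 'f mseq set. \<not> lin_rec M x n (hi n)}"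
    have count: "real (card ?S) * q ^ hi n \<le> q ^ ((n - hi n) * M) * q ^ (n * M)"
      unfolding q_def of_nat_power[symmetric] of_nat_mult[symmetric] of_nat_le_iff
      by (rule card_not_lin_rec_le)
    have "real ((n - hi n) * M) \<le> real (hi n) - d * n"
      using assms(2,3)[of n] by (simp add: of_nat_diff algebra_simps)
    then have "q ^ ((n - hi n) * M) \<le> (q powr (-d)) ^ n * q ^ hi n"
      using q by (intro power_le_geometric_times_power) auto
    then have "q ^ ((n - hi n) * M) * q ^ (n * M) \<le> ((q powr (-d)) ^ n * q ^ hi n) * q ^ (n * M)"
      using q by (intro mult_right_mono) auto
    with count have "real (card ?S) * q ^ hi n \<le> ((q powr (-d)) ^ n * q ^ (n * M)) * q ^ hi n"
      by (simp add: mult_ac)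
    then show ?thesis
      using q by (simp add: q_def)
  qed
  moreover have "q powr (-d) < 1"
    using q assms(1) by (intro powr_less_one) auto
  ultimately have "AE a in seq_measure M :: 'f mseq measure.
      eventually (\<lambda>n. lin_rec M (restrict a {1..n}) n (hi n)) sequentially"
    using AE_eventually_prefix_avoids[where P="\<lambda>n x. \<not> lin_rec M x n (hi n)" and r="q powr (-d)"]
    by auto
  then show ?thesis
    unfolding lin_rec_restrict lin_compl_le_iff .
qed

lemma AE_eventually_rate_less_lin_compl:
  fixes \<alpha> :: real
  assumes "\<alpha> * (real M + 1) < real M"
  shows "AE a in (seq_measure M :: 'f::{finite,field} mseq measure).
           eventually (\<lambda>n. \<alpha> * n < lin_compl M a n) sequentially"
proof (cases "0 \<le> \<alpha>")
  case False
  have "\<alpha> * n < lin_compl M a n" if "0 < n" for a :: "'f mseq" and n :: nat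
    using mult_neg_pos[of \<alpha> "real n"] False that by simp
  then have "eventually (\<lambda>n. \<alpha> * n < lin_compl M a n) sequentially" for a :: "'f mseq"
    by (rule eventually_mono[OF eventually_gt_at_top[of 0]])
  then show ?thesis by simp
next
  case True
  define lo where "lo n = nat \<lfloor>\<alpha> * n\<rfloor>" for n :: nat
  have lo: "real (lo n) \<le> \<alpha> * n" "\<alpha> * n < real (lo n) + 1" for n
    using True by (simp_all add: lo_def)
  have "\<alpha> \<le> 1"
    using assms by (smt (verit) mult_less_cancel_right2 of_nat_0_le_iff)
  then have "real (lo n) \<le> real n" for n
    using order_trans[OF lo(1) mult_left_le_one_le] True by auto
  moreover have "real (lo n * (M + 1)) \<le> real (n * M) - (real M - \<alpha> * (real M + 1)) * n" for n
    using mult_right_mono[OF lo(1)[of n], of "real M + 1"] by (simp add: algebra_simps)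
  ultimately have "AE a in (seq_measure M :: 'f mseq measure).
      eventually (\<lambda>n. lo n < lin_compl M a n) sequentially"
    using assms by (intro AE_eventually_less_lin_compl) auto
  then show ?thesis
  proof eventually_elim
    case (elim a)
    then show ?case
    proof (rule eventually_mono)
      fix n assume "lo n < lin_compl M a n"
      with lo(2)[of n] show "\<alpha> * n < lin_compl M a n" by linarith
    qed
  qed
qed

lemma AE_eventually_lin_compl_less_rate:
  fixes \<beta> :: real
  assumes "real M < \<beta> * (real M + 1)"
  shows "AE a in (seq_measure M :: 'f::{finite,field} mseq measure).
           eventually (\<lambda>n. lin_compl M a n < \<beta> * n + 1) sequentially"
proof (cases "\<beta> \<le> 1")
  case False
  have "lin_compl M a n < \<beta> * n + 1" for a :: "'f mseq" and n
    using lin_compl_le_length[of M a n] False mult_right_mono[of 1 \<beta> "real n"] by simp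
  then show ?thesis by simp
next
  case True
  define hi where "hi n = nat \<lceil>\<beta> * n\<rceil>" for n :: nat
  have "0 \<le> \<beta>"
    using assms by (smt (verit) mult_nonpos_nonneg of_nat_0_le_iff)
  then have hi: "\<beta> * n \<le> real (hi n)" "real (hi n) < \<beta> * n + 1" for n
    unfolding hi_def by (simp_all add: ceiling_correct) linarith
  have "hi n \<le> n" for n
    using \<open>0 \<le> \<beta>\<close> True mult_left_le_one_le[of "real n" \<beta>]
    unfolding hi_def by (simp add: ceiling_le_iff nat_le_iff)
  moreover have "real (n * M) + (\<beta> * (real M + 1) - real M) * n \<le> real (hi n * (M + 1))" for n
    using mult_right_mono[OF hi(1)[of n], of "real M + 1"] by (simp add: algebra_simps)
  ultimately have "AE a in (seq_measure M :: 'f mseq measure).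
      eventually (\<lambda>n. lin_compl M a n \<le> hi n) sequentially"
    using assms by (intro AE_eventually_lin_compl_le) auto
  then show ?thesis
  proof eventually_elim
    case (elim a)
    then show ?case
    proof (rule eventually_mono)
      fix n assume "lin_compl M a n \<le> hi n"
      with hi(2)[of n] show "lin_compl M a n < \<beta> * n + 1" by linarith
    qed
  qed
qed

lemma abs_lc_dev_div_less:
  fixes M n :: nat and a :: "'f::field mseq" and \<epsilon> :: real
  defines "\<theta> \<equiv> real M / (real M + 1)"
  assumes "(\<theta> - \<epsilon> / 2) * n < lin_compl M a n" "lin_compl M a n < (\<theta> + \<epsilon> / 2) * n + 1"
    and "2 / \<epsilon> < n" "0 < \<epsilon>"
  shows "\<bar>lc_dev M a n / n\<bar> < \<epsilon>"
proof -
  have "real (n * M) / real (M + 1) = \<theta> * n"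
    by (simp add: \<theta>_def field_simps)
  then have dev: "lc_dev M a n = int (lin_compl M a n) - \<lceil>\<theta> * n\<rceil>"
    by (simp add: lc_dev_def)
  define e where "e = \<epsilon> / 2 * n"
  have "1 < e"
    using assms(4,5) by (simp add: e_def field_simps)
  then have "0 < n"
    by (cases "n = 0") (auto simp: e_def)
  have "\<theta> * n - e < lin_compl M a n" "lin_compl M a n < \<theta> * n + e + 1"
    using assms(2,3) by (simp_all add: e_def algebra_simps)
  then have "\<bar>real_of_int (lc_dev M a n)\<bar> < 2 * e"
    unfolding dev of_int_diff of_int_of_nat_eq abs_less_iff
    using ceiling_correct[of "\<theta> * n"] \<open>1 < e\<close> by (intro conjI; linarith)
  then show ?thesis
    using \<open>0 < n\<close> by (simp add: e_def abs_divide divide_less_eq)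
qed

lemma AE_eventually_abs_lc_dev_div_less:
  fixes \<epsilon> :: real
  assumes "0 < \<epsilon>"
  shows "AE a in (seq_measure M :: 'f::{finite,field} mseq measure).
           eventually (\<lambda>n. \<bar>lc_dev M a n / n\<bar> < \<epsilon>) sequentially"
proof -
  define \<theta> where "\<theta> = real M / (real M + 1)"
  have "\<theta> * (real M + 1) = real M"
    by (simp add: \<theta>_def)
  then have "AE a in (seq_measure M :: 'f mseq measure).
      eventually (\<lambda>n. (\<theta> - \<epsilon> / 2) * n < lin_compl M a n) sequentially"
    "AE a in (seq_measure M :: 'f mseq measure).
      eventually (\<lambda>n. lin_compl M a n < (\<theta> + \<epsilon> / 2) * n + 1) sequentially"
    using assms by (intro AE_eventually_rate_less_lin_compl AE_eventually_lin_compl_less_rate;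
        simp add: algebra_simps add_pos_nonneg)+
  then show ?thesis
  proof eventually_elim
    case (elim a)
    moreover have "eventually (\<lambda>n. 2 / \<epsilon> < real n) sequentially"
      using filterlim_real_sequentially unfolding filterlim_at_top_dense by blast
    ultimately show ?case
      by eventually_elim (rule abs_lc_dev_div_less; use assms in \<open>simp add: \<theta>_def\<close>)
  qed
qed

lemma ereal_liminf_limsup_bounds:
  assumes "eventually (\<lambda>n. c \<le> f n \<and> f n \<le> d) sequentially"
  shows "ereal c \<le> liminf (\<lambda>n. ereal (f n))" "liminf (\<lambda>n. ereal (f n)) \<le> limsup (\<lambda>n. ereal (f n))"
    "limsup (\<lambda>n. ereal (f n)) \<le> ereal d"
proof -
  show "ereal c \<le> liminf (\<lambda>n. ereal (f n))"
    by (rule Liminf_bounded) (use assms in \<open>auto elim: eventually_mono\<close>)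
  show "liminf (\<lambda>n. ereal (f n)) \<le> limsup (\<lambda>n. ereal (f n))"
    by (rule Liminf_le_Limsup) simp
  show "limsup (\<lambda>n. ereal (f n)) \<le> ereal d"
    by (rule Limsup_bounded) (use assms in \<open>auto elim: eventually_mono\<close>)
qed

theorem mainTheorem15:
  fixes M :: nat and \<epsilon> :: real
  assumes "M \<ge> 1" and "\<epsilon> > 0"
  shows "AE a in (seq_measure M :: (nat \<Rightarrow> nat \<Rightarrow> 'f::{finite,field}) measure).
           ereal (- \<epsilon>) < liminf (\<lambda>n. ereal (real_of_int (lc_dev M a n) / real n)) \<and>
           liminf (\<lambda>n. ereal (real_of_int (lc_dev M a n) / real n))
             \<le> limsup (\<lambda>n. ereal (real_of_int (lc_dev M a n) / real n)) \<and>
           limsup (\<lambda>n. ereal (real_of_int (lc_dev M a n) / real n)) < ereal \<epsilon>"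
proof -
  have "AE a in (seq_measure M :: 'f mseq measure).
      eventually (\<lambda>n. \<bar>lc_dev M a n / n\<bar> < \<epsilon> / 2) sequentially"
    using assms(2) by (intro AE_eventually_abs_lc_dev_div_less) simp
  then show ?thesis
  proof eventually_elim
    case (elim a)
    then have "eventually (\<lambda>n. - (\<epsilon> / 2) \<le> lc_dev M a n / n \<and> lc_dev M a n / n \<le> \<epsilon> / 2)
        sequentially"
      by (rule eventually_mono) (simp only: abs_less_iff, linarith)
    note bounds = ereal_liminf_limsup_bounds[OF this]
    have "ereal (- \<epsilon>) < ereal (- (\<epsilon> / 2))" "ereal (\<epsilon> / 2) < ereal \<epsilon>"
      using assms(2) by auto
    with bounds show ?case
      by (meson order.strict_trans1 order.strict_trans2)
  qed
qed

end
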